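(* For $i\in\{1,2\}$ let $\Sigma_{i,\mathbb{T}}$ be the linear time-varying system $x_i(t+1)=A_i(t)x_i(t)+B_i(t)u_i(t)$, $y_i(t)=C_i(t)x_i(t)+D_i(t)u_i(t)$, $t\in\mathbb{T}=\{0,\dots,T-1\}$, with $u_i(t)\in\mathbb{R}^{n_u}$, $y_i(t)\in\mathbb{R}^{n_y}$ and initial state $x_i(0)=x_{i0}$, with admissible behavior $\mathcal{B}_{i,x_{i0}}$. Suppose: (C1) for each $i$, test inputs $\mathbf{u}_i^0,\dots,\mathbf{u}_i^{n_uT}\in\mathbb{R}^{n_uT}$ are applied from $x_{i0}$ with outputs $\mathbf{y}_i^k$, where $\mathbf{u}_i^0=0$ and $\operatorname{rank}[\mathbf{u}_i^1,\dots,\mathbf{u}_i^{n_uT}]=n_uT$; with $w_i^k=\operatorname{col}(\mathbf{u}_i^k,\mathbf{y}_i^k)$ and $W_i=[w_i^1-w_i^0,\dots,w_i^{n_uT}-w_i^0]$; (C2) $H_i\in\mathbb{R}^{n_wT\times n_uT}$ is a matrix whose columns form an orthonormal basis of $\operatorname{span}(W_i)$; (C3) there exist $l_1,l_2\in\mathbb{R}^{n_uT}$ with $H_1l_1+H_2l_2=w_2^0-w_1^0$; (C4) $H_1^{\rm T}H_2=UDV^{\rm T}$ is a singular value decomposition with $U,V$ orthogonal and $D=\operatorname{diag}(s_1,\dots,s_{n_uT})$, $s_1\ge\dots\ge s_{n_uT}>0$. Let $w_g\in\mathcal{B}_{2,x_{20}}$, let $\overline{g}\in\mathbb{R}^{n_uT}$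 satisfy $w_g=H_2V\overline{g}+w_2^0$, and define $w_h=H_1UD\overline{g}+P_{\operatorname{span}(H_1)}(w_2^0-w_1^0)+w_1^0$. Then $w_h\in\mathcal{B}_{1,x_{10}}$ and $\|w_h-w_g\|=\min_{w\in\mathcal{B}_{1,x_{10}}}\|w-w_g\|$.
   Context: $n_w=n_u+n_y$. Supervectors over $\mathbb{T}$: $\mathbf{u}_i=[u_i(0)^{\rm T},\dots,u_i(T-1)^{\rm T}]^{\rm T}$, likewise $\mathbf{y}_i,\mathbf{x}_i$. The admissible behavior $\mathcal{B}_{i,x_{i0}}\subseteq\mathbb{R}^{n_wT}$ is the set of all $\operatorname{col}(\mathbf{u}_i,\mathbf{y}_i)$ for which there exists a state supervector $\mathbf{x}_i$ with $x_i(0)=x_{i0}$ such that $(\mathbf{u}_i,\mathbf{y}_i,\mathbf{x}_i)$ satisfies the system equations; $\mathbf{y}_i^k$ is the output supervector under input $\mathbf{u}_i^k$ from $x_{i0}$. $P_{\operatorname{span}(H_1)}$ denotes the orthogonal projection of $\mathbb{R}^{n_wT}$ onto $\operatorname{span}(H_1)$ (with respect to the standard inner product), and $\|\cdot\|$ is the Euclidean norm. *)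

theory Defs
  imports "Jordan_Normal_Form.DL_Rank"
begin

definition supervec :: "nat \<Rightarrow> nat \<Rightarrow> (nat \<Rightarrow> real vec) \<Rightarrow> real vec" where
  "supervec m T f = vec (m * T) (\<lambda>j. f (j div m) $ (j mod m))"

definition sample :: "nat \<Rightarrow> real vec \<Rightarrow> nat \<Rightarrow> real vec" where
  "sample m U t = vec m (\<lambda>j. U $ (t * m + j))"

fun state :: "(nat \<Rightarrow> real mat) \<Rightarrow> (nat \<Rightarrow> real mat) \<Rightarrow> real vec \<Rightarrow> (nat \<Rightarrow> real vec) \<Rightarrow> nat \<Rightarrow> real vec" where
  "state A B x0 u 0 = x0"
| "state A B x0 u (Suc t) = A t *\<^sub>v state A B x0 u t + B t *\<^sub>v u t"

definition out_sv :: "(nat \<Rightarrow> real mat) \<Rightarrow> (nat \<Rightarrow> real mat) \<Rightarrow> (nat \<Rightarrow> real mat) \<Rightarrow> (nat \<Rightarrow> real mat)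
    \<Rightarrow> nat \<Rightarrow> nat \<Rightarrow> nat \<Rightarrow> real vec \<Rightarrow> real vec \<Rightarrow> real vec" where
  "out_sv A B C D nu ny T x0 U =
     supervec ny T (\<lambda>t. C t *\<^sub>v state A B x0 (sample nu U) t + D t *\<^sub>v sample nu U t)"

definition behavior :: "(nat \<Rightarrow> real mat) \<Rightarrow> (nat \<Rightarrow> real mat) \<Rightarrow> (nat \<Rightarrow> real mat) \<Rightarrow> (nat \<Rightarrow> real mat)
    \<Rightarrow> nat \<Rightarrow> nat \<Rightarrow> nat \<Rightarrow> real vec \<Rightarrow> real vec set" where
  "behavior A B C D nu ny T x0 =
     {supervec nu T u @\<^sub>v supervec ny T y | u y.
        (\<forall>t<T. u t \<in> carrier_vec nu \<and> y t \<in> carrier_vec ny) \<and>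
        (\<exists>x. x 0 = x0 \<and>
           (\<forall>t<T. x (Suc t) = A t *\<^sub>v x t + B t *\<^sub>v u t \<and> y t = C t *\<^sub>v x t + D t *\<^sub>v u t))}"

definition vnorm :: "real vec \<Rightarrow> real" where
  "vnorm v = sqrt (v \<bullet> v)"

definition oproj :: "real vec set \<Rightarrow> real vec \<Rightarrow> real vec" where
  "oproj S v = (THE p. p \<in> S \<and> (\<forall>q\<in>S. (v - p) \<bullet> q = 0))"

definition diag_of :: "nat \<Rightarrow> (nat \<Rightarrow> real) \<Rightarrow> real mat" where
  "diag_of n s = mat n n (\<lambda>(i, j). if i = j then s i else 0)"

end

theory Submission
  imports Defs
begin

text \<open>By superposition, the trajectory \<open>col(u, y)\<close> of system 1 started in \<open>x\<^sub>1\<^sub>0\<close> is an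
  affine function \<open>w\<^sub>1\<^sup>0 + M u\<close> of the input supervector \<open>u\<close>. The columns \<open>w\<^sub>1\<^sup>k - w\<^sub>1\<^sup>0\<close> of
  \<open>W\<^sub>1\<close> are \<open>M\<close> applied to the invertible matrix of test inputs, so \<open>span W\<^sub>1 = range M\<close> and the
  behaviour is the affine subspace \<open>w\<^sub>1\<^sup>0 + span H\<^sub>1\<close>. A point \<open>w\<^sub>1\<^sup>0 + H\<^sub>1 a\<close> of it is nearest
  to \<open>w\<^sub>g\<close> once the residual is orthogonal to \<open>span H\<^sub>1\<close> (Pythagoras). For \<open>w\<^sub>h\<close> this normal
  equation \<open>H\<^sub>1\<^sup>T (w\<^sub>h - w\<^sub>g) = 0\<close> follows from \<open>H\<^sub>1\<^sup>T H\<^sub>1 = I\<close>, from the projection being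
  \<open>H\<^sub>1 H\<^sub>1\<^sup>T\<close>, and from \<open>H\<^sub>1\<^sup>T H\<^sub>2 V = U D\<close>. Condition (C3), the ordering and positivity of the
  singular values.\<close>

lemma mult_mat_vec_lincomb:
  fixes M :: "'a :: field mat"
  assumes "M \<in> carrier_mat m n" "v \<in> carrier_vec n" "w \<in> carrier_vec n"
  shows "M *\<^sub>v (a \<cdot>\<^sub>v v + b \<cdot>\<^sub>v w) = a \<cdot>\<^sub>v (M *\<^sub>v v) + b \<cdot>\<^sub>v (M *\<^sub>v w)"
  using assms by (simp add: mult_add_distrib_mat_vec[OF assms(1)] mult_mat_vec[OF assms(1)])

lemma lincomb_add_lincomb:
  fixes p q r s :: "'a :: comm_ring vec"
  assumes "p \<in> carrier_vec n" "q \<in> carrier_vec n" "r \<in> carrier_vec n" "s \<in> carrier_vec n"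
  shows "(a \<cdot>\<^sub>v p + b \<cdot>\<^sub>v q) + (a \<cdot>\<^sub>v r + b \<cdot>\<^sub>v s) = a \<cdot>\<^sub>v (p + r) + b \<cdot>\<^sub>v (q + s)"
  using assms by (intro eq_vecI) (simp_all add: algebra_simps)

lemma smult_append_vec: "a \<cdot>\<^sub>v (v @\<^sub>v w) = (a \<cdot>\<^sub>v v) @\<^sub>v (a \<cdot>\<^sub>v w)"
  by (intro eq_vecI) (simp_all add: index_append_vec)

lemma block_index_less: "t < T \<Longrightarrow> j < m \<Longrightarrow> t * m + j < m * (T::nat)"
proof -
  assume "t < T" "j < m"
  then have "t * m + j < Suc t * m" by simp
  also have "\<dots> \<le> T * m" using \<open>t < T\<close> by (intro mult_le_mono1) simp
  finally show ?thesis by (simp add: mult.commute)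
qed

lemma block_div_mod_less: "j < m * (T::nat) \<Longrightarrow> j div m < T \<and> j mod m < m"
  by (cases "m = 0") (auto simp: less_mult_imp_div_less mult.commute)

lemma supervec_carrier [simp]: "supervec m T f \<in> carrier_vec (m * T)"
  by (simp add: supervec_def)

lemma sample_carrier [simp]: "sample m U t \<in> carrier_vec m"
  by (simp add: sample_def)

lemma supervec_cong: "(\<And>t. t < T \<Longrightarrow> f t = g t) \<Longrightarrow> supervec m T f = supervec m T g"
  unfolding supervec_def by (intro eq_vecI) (auto simp: block_div_mod_less)

lemma supervec_lincomb:
  assumes "\<And>t. t < T \<Longrightarrow> f t \<in> carrier_vec m \<and> g t \<in> carrier_vec m"
  shows "supervec m T (\<lambda>t. a \<cdot>\<^sub>v f t + b \<cdot>\<^sub>v g t) = a \<cdot>\<^sub>v supervec m T f + b \<cdot>\<^sub>v supervec m T g"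
proof (intro eq_vecI)
  fix j assume "j < dim_vec (a \<cdot>\<^sub>v supervec m T f + b \<cdot>\<^sub>v supervec m T g)"
  then have j: "j < m * T" by (simp add: supervec_def)
  then have t: "j div m < T" and i: "j mod m < m" using block_div_mod_less by auto
  from assms[OF t] have "f (j div m) \<in> carrier_vec m" "g (j div m) \<in> carrier_vec m" by auto
  then show "supervec m T (\<lambda>t. a \<cdot>\<^sub>v f t + b \<cdot>\<^sub>v g t) $ j =
      (a \<cdot>\<^sub>v supervec m T f + b \<cdot>\<^sub>v supervec m T g) $ j"
    using j i unfolding supervec_def by simp
qed (simp add: supervec_def)

lemma sample_supervec: "t < T \<Longrightarrow> u t \<in> carrier_vec m \<Longrightarrow> sample m (supervec m T u) t = u t"
  unfolding sample_def supervec_def by (intro eq_vecI) (auto simp: block_index_less)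

lemma supervec_sample: "U \<in> carrier_vec (m * T) \<Longrightarrow> supervec m T (sample m U) = U"
  unfolding sample_def supervec_def
  by (intro eq_vecI) (auto simp: block_div_mod_less)

lemma sample_lincomb:
  "U \<in> carrier_vec (m * T) \<Longrightarrow> U' \<in> carrier_vec (m * T) \<Longrightarrow> t < T \<Longrightarrow>
    sample m (a \<cdot>\<^sub>v U + b \<cdot>\<^sub>v U') t = a \<cdot>\<^sub>v sample m U t + b \<cdot>\<^sub>v sample m U' t"
  unfolding sample_def by (intro eq_vecI) (auto simp: block_index_less)

lemma ex_mat_of_linear:
  fixes f :: "'a :: field vec \<Rightarrow> 'a vec"
  assumes carrier: "\<And>x. x \<in> carrier_vec n \<Longrightarrow> f x \<in> carrier_vec m"
    and linear: "\<And>a b x y. x \<in> carrier_vec n \<Longrightarrow> y \<in> carrier_vec n \<Longrightarrow>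
      f (a \<cdot>\<^sub>v x + b \<cdot>\<^sub>v y) = a \<cdot>\<^sub>v f x + b \<cdot>\<^sub>v f y"
  shows "\<exists>M \<in> carrier_mat m n. \<forall>x \<in> carrier_vec n. f x = M *\<^sub>v x"
proof -
  define M where "M = mat m n (\<lambda>(i, j). f (unit_vec n j) $ i)"
  have f_zero: "f (0\<^sub>v n) = 0\<^sub>v m"
  proof -
    have "0 \<cdot>\<^sub>v 0\<^sub>v n + 0 \<cdot>\<^sub>v 0\<^sub>v n = (0\<^sub>v n :: 'a vec)" by (intro eq_vecI) simp_all
    then have "f (0\<^sub>v n) = f (0 \<cdot>\<^sub>v 0\<^sub>v n + 0 \<cdot>\<^sub>v 0\<^sub>v n)" by simp
    also have "\<dots> = 0 \<cdot>\<^sub>v f (0\<^sub>v n) + 0 \<cdot>\<^sub>v f (0\<^sub>v n)" by (rule linear) simp_all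
    also have "\<dots> = 0\<^sub>v m" using carrier[of "0\<^sub>v n"] by (intro eq_vecI) auto
    finally show ?thesis .
  qed
  have partial: "f (vec n (\<lambda>i. if i < k then x $ i else 0)) =
      vec m (\<lambda>i. \<Sum>j<k. x $ j * f (unit_vec n j) $ i)"
    if "k \<le> n" for k x
    using that
  proof (induction k)
    case 0
    have "vec n (\<lambda>i. if i < 0 then x $ i else 0) = 0\<^sub>v n" by (intro eq_vecI) simp_all
    then show ?case using f_zero by (auto intro!: eq_vecI)
  next
    case (Suc k)
    have "vec n (\<lambda>i. if i < Suc k then x $ i else 0) =
        1 \<cdot>\<^sub>v vec n (\<lambda>i. if i < k then x $ i else 0) + x $ k \<cdot>\<^sub>v unit_vec n k"
      by (intro eq_vecI) (auto simp: unit_vec_def less_Suc_eq)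
    then have "f (vec n (\<lambda>i. if i < Suc k then x $ i else 0)) =
        1 \<cdot>\<^sub>v f (vec n (\<lambda>i. if i < k then x $ i else 0)) + x $ k \<cdot>\<^sub>v f (unit_vec n k)"
      by (simp only:) (rule linear; simp)
    also have "\<dots> = vec m (\<lambda>i. \<Sum>j<Suc k. x $ j * f (unit_vec n j) $ i)"
      using Suc carrier[of "unit_vec n k"] by (intro eq_vecI) auto
    finally show ?case .
  qed
  have "f x = M *\<^sub>v x" if x: "x \<in> carrier_vec n" for x
  proof -
    have "x = vec n (\<lambda>i. if i < n then x $ i else 0)" using x by (intro eq_vecI) auto
    then have "f x = vec m (\<lambda>i. \<Sum>j<n. x $ j * f (unit_vec n j) $ i)" using partial[of n x] by simp
    also have "\<dots> = M *\<^sub>v x"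
      using x by (intro eq_vecI) (auto simp: M_def scalar_prod_def lessThan_atLeast0 mult.commute)
    finally show ?thesis .
  qed
  moreover have "M \<in> carrier_mat m n" by (simp add: M_def)
  ultimately show ?thesis by blast
qed

lemma col_space_eq_image:
  fixes M :: "'a :: field mat"
  assumes "M \<in> carrier_mat m n"
  shows "vec_space.col_space m M = (\<lambda>x. M *\<^sub>v x) ` carrier_vec n"
  using vec_space.col_space_eq[OF assms] assms by auto

lemma col_space_mult_invertible:
  fixes M P :: "'a :: field mat"
  assumes M: "M \<in> carrier_mat m n" and P: "P \<in> carrier_mat n n" and "det P \<noteq> 0"
  shows "vec_space.col_space m (M * P) = vec_space.col_space m M"
proof -
  from det_non_zero_imp_unit[OF P \<open>det P \<noteq> 0\<close>, unfolded Units_def, of "()"]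
  obtain Q where Q: "Q \<in> carrier_mat n n" and PQ: "P * Q = 1\<^sub>m n"
    by (auto simp: ring_mat_def)
  have "(\<lambda>x. (M * P) *\<^sub>v x) ` carrier_vec n = (\<lambda>x. M *\<^sub>v x) ` carrier_vec n"
  proof (intro equalityI subsetI)
    fix y assume "y \<in> (\<lambda>x. (M * P) *\<^sub>v x) ` carrier_vec n"
    then obtain x where "x \<in> carrier_vec n" "y = M *\<^sub>v (P *\<^sub>v x)"
      using M P by (auto simp: assoc_mult_mat_vec)
    then show "y \<in> (\<lambda>x. M *\<^sub>v x) ` carrier_vec n" using P by auto
  next
    fix y assume "y \<in> (\<lambda>x. M *\<^sub>v x) ` carrier_vec n"
    then obtain x where x: "x \<in> carrier_vec n" "y = M *\<^sub>v x" by blast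
    then have "y = (M * P) *\<^sub>v (Q *\<^sub>v x)"
      using M P Q PQ by (simp add: assoc_mult_mat_vec[symmetric] assoc_mult_mat[of M m n P n Q n])
    then show "y \<in> (\<lambda>x. (M * P) *\<^sub>v x) ` carrier_vec n" using Q x by auto
  qed
  then show ?thesis using M P by (simp add: col_space_eq_image[of _ m n])
qed

lemma affine_image_eq_translated_col_space:
  fixes f :: "'a :: field vec \<Rightarrow> 'a vec"
  assumes M: "M \<in> carrier_mat m n"
    and f: "\<And>x. x \<in> carrier_vec n \<Longrightarrow> f x = f (0\<^sub>v n) + M *\<^sub>v x"
    and u: "\<And>k. k \<in> {1..n} \<Longrightarrow> u k \<in> carrier_vec n"
    and rank: "vec_space.rank n (mat_of_cols n (map u [1..<n + 1])) = n"
  shows "f ` carrier_vec n = (\<lambda>y. f (0\<^sub>v n) + y) `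
    vec_space.col_space m (mat_of_cols m (map (\<lambda>k. f (u k) - f (0\<^sub>v n)) [1..<n + 1]))"
proof -
  let ?P = "mat_of_cols n (map u [1..<n + 1])"
  have P: "?P \<in> carrier_mat n n" by (intro carrier_matI) (simp_all del: upt_Suc)
  have f0: "f (0\<^sub>v n) \<in> carrier_vec m"
    using arg_cong[OF f[of "0\<^sub>v n"], of dim_vec] M by (intro carrier_vecI) simp
  have W: "mat_of_cols m (map (\<lambda>k. f (u k) - f (0\<^sub>v n)) [1..<n + 1]) = M * ?P"
  proof (rule eq_matI)
    fix i k assume i: "i < dim_row (M * ?P)" and k: "k < dim_col (M * ?P)"
    then have "i < m" "k < n" using M P by auto
    moreover have uk: "u (Suc k) \<in> carrier_vec n" using u \<open>k < n\<close> by simp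
    moreover have "f (u (Suc k)) - f (0\<^sub>v n) = M *\<^sub>v u (Suc k)"
      using f[OF uk] f0 M uk by (intro eq_vecI) auto
    ultimately show "mat_of_cols m (map (\<lambda>k. f (u k) - f (0\<^sub>v n)) [1..<n + 1]) $$ (i, k) =
        (M * ?P) $$ (i, k)"
      using M by (simp add: mat_of_cols_index col_mat_of_cols del: upt_Suc)
  qed (use M P in \<open>simp_all del: upt_Suc\<close>)
  have "det ?P \<noteq> 0" using vec_space.det_rank_iff[OF P] rank by simp
  have "f ` carrier_vec n = (\<lambda>x. f (0\<^sub>v n) + M *\<^sub>v x) ` carrier_vec n"
    using f by (rule image_cong[OF refl])
  also have "\<dots> = (\<lambda>y. f (0\<^sub>v n) + y) ` vec_space.col_space m (M * ?P)"
    unfolding col_space_mult_invertible[OF M P \<open>det ?P \<noteq> 0\<close>] col_space_eq_image[OF M] image_image ..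
  finally show ?thesis unfolding W .
qed

lemma transpose_mult_orthonormal:
  fixes H :: "'a :: comm_ring_1 mat"
  assumes "H \<in> carrier_mat m n" and "H\<^sup>T * H = 1\<^sub>m n" and "x \<in> carrier_vec n"
  shows "H\<^sup>T *\<^sub>v (H *\<^sub>v x) = x"
  using assms by (simp add: assoc_mult_mat_vec[symmetric])

lemma scalar_prod_col_space_eq_0:
  fixes H :: "'a :: comm_ring_1 mat"
  assumes "H \<in> carrier_mat m n" and "r \<in> carrier_vec m" and "H\<^sup>T *\<^sub>v r = 0\<^sub>v n" and "c \<in> carrier_vec n"
  shows "r \<bullet> (H *\<^sub>v c) = 0"
  using transpose_vec_mult_scalar[OF assms(1,4,2)] assms(3,4) by simp

lemma oproj_eqI:
  assumes S: "S \<subseteq> carrier_vec m" and diff: "\<And>p q. p \<in> S \<Longrightarrow> q \<in> S \<Longrightarrow> p - q \<in> S"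
    and p: "p \<in> S" and v: "v \<in> carrier_vec m" and orth: "\<forall>q \<in> S. (v - p) \<bullet> q = 0"
  shows "oproj S v = p"
  unfolding oproj_def
proof (rule the_equality)
  show "p \<in> S \<and> (\<forall>q \<in> S. (v - p) \<bullet> q = 0)" using p orth by blast
next
  fix p' assume p': "p' \<in> S \<and> (\<forall>q \<in> S. (v - p') \<bullet> q = 0)"
  let ?d = "p - p'"
  have d: "?d \<in> S" "?d \<in> carrier_vec m" using diff p p' S by auto
  have car: "p \<in> carrier_vec m" "p' \<in> carrier_vec m" using p p' S by auto
  have "?d = (v - p') - (v - p)" using v car by (intro eq_vecI) auto
  then have "?d \<bullet> ?d = ((v - p') - (v - p)) \<bullet> ?d" by simp
  also have "\<dots> = (v - p') \<bullet> ?d - (v - p) \<bullet> ?d"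
    using v car by (intro minus_scalar_prod_distrib[of _ m]) auto
  also have "\<dots> = 0" using p' orth d by simp
  finally have d0: "?d = 0\<^sub>v m" using conjugate_square_eq_0_vec[OF d(2)] by simp
  show "p' = p"
  proof (rule eq_vecI)
    fix i assume i: "i < dim_vec p"
    then have "(p - p') $ i = 0" using d0 car by simp
    then show "p' $ i = p $ i" using car i by simp
  qed (use car in simp)
qed

lemma oproj_col_space_orthonormal:
  fixes H :: "real mat"
  assumes H: "H \<in> carrier_mat m n" and orth: "H\<^sup>T * H = 1\<^sub>m n" and v: "v \<in> carrier_vec m"
  shows "oproj (vec_space.col_space m H) v = H *\<^sub>v (H\<^sup>T *\<^sub>v v)"
proof (rule oproj_eqI)
  let ?p = "H *\<^sub>v (H\<^sup>T *\<^sub>v v)"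
  have "H\<^sup>T *\<^sub>v (v - ?p) = H\<^sup>T *\<^sub>v v - H\<^sup>T *\<^sub>v ?p"
    using H v by (simp add: mult_minus_distrib_mat_vec)
  also have "\<dots> = 0\<^sub>v n"
    using H v by (simp add: transpose_mult_orthonormal[OF H orth])
  finally have "H\<^sup>T *\<^sub>v (v - ?p) = 0\<^sub>v n" .
  then show "\<forall>q \<in> vec_space.col_space m H. (v - ?p) \<bullet> q = 0"
    using H v by (auto simp: col_space_eq_image[OF H] intro: scalar_prod_col_space_eq_0)
  show "\<And>p q. p \<in> vec_space.col_space m H \<Longrightarrow> q \<in> vec_space.col_space m H \<Longrightarrow>
      p - q \<in> vec_space.col_space m H"
    using H by (auto simp: col_space_eq_image[OF H] mult_minus_distrib_mat_vec[symmetric])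
qed (use H v in \<open>auto simp: col_space_eq_image[OF H]\<close>)

lemma vnorm_le_add_orthogonal:
  assumes "r \<in> carrier_vec m" and "q \<in> carrier_vec m" and "r \<bullet> q = 0"
  shows "vnorm r \<le> vnorm (r + q)"
proof -
  have "(r + q) \<bullet> (r + q) = r \<bullet> r + q \<bullet> q"
    using assms
    by (simp add: add_scalar_prod_distrib scalar_prod_add_distrib comm_scalar_prod[of q m r])
  moreover have "q \<bullet> q \<ge> 0" using conjugate_square_ge_0_vec[of q] by simp
  ultimately show ?thesis unfolding vnorm_def by simp
qed

lemma nearest_point_translated_col_space:
  fixes H :: "real mat"
  assumes H: "H \<in> carrier_mat m n" and w0: "w0 \<in> carrier_vec m" and wg: "wg \<in> carrier_vec m"
    and a: "a \<in> carrier_vec n"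
    and normal: "H\<^sup>T *\<^sub>v (w0 + H *\<^sub>v a - wg) = 0\<^sub>v n"
    and w: "w \<in> (\<lambda>y. w0 + y) ` vec_space.col_space m H"
  shows "vnorm (w0 + H *\<^sub>v a - wg) \<le> vnorm (w - wg)"
proof -
  obtain c where c: "c \<in> carrier_vec n" and w_eq: "w = w0 + H *\<^sub>v c"
    using w by (auto simp: col_space_eq_image[OF H])
  let ?r = "w0 + H *\<^sub>v a - wg"
  have "H *\<^sub>v (c - a) = H *\<^sub>v c - H *\<^sub>v a" using H a c by (simp add: mult_minus_distrib_mat_vec)
  then have "w - wg = ?r + H *\<^sub>v (c - a)"
    unfolding w_eq using H w0 wg a c by (intro eq_vecI) auto
  moreover have "?r \<bullet> (H *\<^sub>v (c - a)) = 0"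
    using H w0 wg a c normal by (intro scalar_prod_col_space_eq_0[of _ m n]) auto
  ultimately show ?thesis
    using H w0 wg a c by (simp add: vnorm_le_add_orthogonal[of _ m])
qed

lemma nearest_point_via_svd:
  fixes H1 H2 U Dm V :: "real mat"
  assumes H1: "H1 \<in> carrier_mat m n" and H2: "H2 \<in> carrier_mat m n" and H1_orth: "H1\<^sup>T * H1 = 1\<^sub>m n"
    and U: "U \<in> carrier_mat n n" and Dm: "Dm \<in> carrier_mat n n"
    and V: "V \<in> carrier_mat n n" and V_orth: "V\<^sup>T * V = 1\<^sub>m n"
    and svd: "H1\<^sup>T * H2 = U * Dm * V\<^sup>T"
    and w1: "w1 \<in> carrier_vec m" and w2: "w2 \<in> carrier_vec m" and g: "g \<in> carrier_vec n"
  defines "wh \<equiv> H1 *\<^sub>v (U *\<^sub>v (Dm *\<^sub>v g)) + oproj (vec_space.col_space m H1) (w2 - w1) + w1"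
    and "wg \<equiv> H2 *\<^sub>v (V *\<^sub>v g) + w2"
  shows "wh \<in> (\<lambda>y. w1 + y) ` vec_space.col_space m H1 \<and>
    (\<forall>w \<in> (\<lambda>y. w1 + y) ` vec_space.col_space m H1. vnorm (wh - wg) \<le> vnorm (w - wg))"
proof -
  define a where "a = U *\<^sub>v (Dm *\<^sub>v g) + H1\<^sup>T *\<^sub>v (w2 - w1)"
  have a: "a \<in> carrier_vec n" unfolding a_def using U Dm g H1 w1 w2 by auto
  have "oproj (vec_space.col_space m H1) (w2 - w1) = H1 *\<^sub>v (H1\<^sup>T *\<^sub>v (w2 - w1))"
    using w1 w2 by (intro oproj_col_space_orthonormal[OF H1 H1_orth]) auto
  moreover have "H1 *\<^sub>v a = H1 *\<^sub>v (U *\<^sub>v (Dm *\<^sub>v g)) + H1 *\<^sub>v (H1\<^sup>T *\<^sub>v (w2 - w1))"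
    unfolding a_def using H1 U Dm g w1 w2 by (intro mult_add_distrib_mat_vec[OF H1]) auto
  ultimately have wh: "wh = w1 + H1 *\<^sub>v a"
    unfolding wh_def using H1 U Dm g w1 w2 by (intro eq_vecI) auto
  have svd_g: "H1\<^sup>T *\<^sub>v (H2 *\<^sub>v (V *\<^sub>v g)) = U *\<^sub>v (Dm *\<^sub>v g)"
  proof -
    have "H1\<^sup>T *\<^sub>v (H2 *\<^sub>v (V *\<^sub>v g)) = (U * Dm * V\<^sup>T) *\<^sub>v (V *\<^sub>v g)"
      using H1 H2 V g by (simp add: svd[symmetric] assoc_mult_mat_vec)
    also have "\<dots> = (U * Dm) *\<^sub>v (V\<^sup>T *\<^sub>v (V *\<^sub>v g))"
      using U Dm V g by (intro assoc_mult_mat_vec) auto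
    also have "\<dots> = U *\<^sub>v (Dm *\<^sub>v g)"
      using U Dm V g by (simp add: transpose_mult_orthonormal[OF V V_orth] assoc_mult_mat_vec)
    finally show ?thesis .
  qed
  have wg: "wg \<in> carrier_vec m" unfolding wg_def using H2 V g w2 by auto
  have "w1 + H1 *\<^sub>v a - wg = H1 *\<^sub>v a - (H2 *\<^sub>v (V *\<^sub>v g) + (w2 - w1))"
    unfolding wg_def using H1 H2 V g a w1 w2 by (intro eq_vecI) auto
  also have "H1\<^sup>T *\<^sub>v \<dots> = H1\<^sup>T *\<^sub>v (H1 *\<^sub>v a) - (H1\<^sup>T *\<^sub>v (H2 *\<^sub>v (V *\<^sub>v g)) + H1\<^sup>T *\<^sub>v (w2 - w1))"
    using H1 H2 V g a w1 w2
    by (simp add: mult_minus_distrib_mat_vec[of _ n m] mult_add_distrib_mat_vec[of _ n m])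
  also have "\<dots> = a - (U *\<^sub>v (Dm *\<^sub>v g) + H1\<^sup>T *\<^sub>v (w2 - w1))"
    unfolding transpose_mult_orthonormal[OF H1 H1_orth a] svd_g ..
  also have "\<dots> = 0\<^sub>v n"
    unfolding a_def using U Dm g H1 w1 w2 by (intro eq_vecI) auto
  finally have normal: "H1\<^sup>T *\<^sub>v (w1 + H1 *\<^sub>v a - wg) = 0\<^sub>v n" .
  have "wh \<in> (\<lambda>y. w1 + y) ` vec_space.col_space m H1"
    unfolding wh col_space_eq_image[OF H1] using a by blast
  moreover have "vnorm (wh - wg) \<le> vnorm (w - wg)"
    if "w \<in> (\<lambda>y. w1 + y) ` vec_space.col_space m H1" for w
    unfolding wh using nearest_point_translated_col_space[OF H1 w1 wg a normal that] .
  ultimately show ?thesis by blast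
qed

lemma append_out_sv_carrier:
  "U \<in> carrier_vec (nu * T) \<Longrightarrow> U @\<^sub>v out_sv A B C D nu ny T x U \<in> carrier_vec ((nu + ny) * T)"
  by (simp add: out_sv_def distrib_right)

locale ltv_system =
  fixes A B C D :: "nat \<Rightarrow> real mat" and nx nu ny T :: nat
  assumes dims: "\<And>t. t < T \<Longrightarrow> A t \<in> carrier_mat nx nx \<and> B t \<in> carrier_mat nx nu \<and>
        C t \<in> carrier_mat ny nx \<and> D t \<in> carrier_mat ny nu"
begin

lemma carrier_mats:
  assumes "t < T"
  shows "A t \<in> carrier_mat nx nx" "B t \<in> carrier_mat nx nu"
    and "C t \<in> carrier_mat ny nx" "D t \<in> carrier_mat ny nu"
  using dims[OF assms] by auto

lemma state_carrier: "t \<le> T \<Longrightarrow> x \<in> carrier_vec nx \<Longrightarrow> state A B x u t \<in> carrier_vec nx"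
proof (induction t)
  case (Suc t)
  then have "B t \<in> carrier_mat nx nu" using carrier_mats by simp
  then show ?case by (intro carrier_vecI) simp
qed simp

lemma state_lincomb:
  assumes "t \<le> T" and "x \<in> carrier_vec nx" and "x' \<in> carrier_vec nx"
    and "\<And>s. s < t \<Longrightarrow> u s \<in> carrier_vec nu \<and> u' s \<in> carrier_vec nu \<and> v s = a \<cdot>\<^sub>v u s + b \<cdot>\<^sub>v u' s"
  shows "state A B (a \<cdot>\<^sub>v x + b \<cdot>\<^sub>v x') v t = a \<cdot>\<^sub>v state A B x u t + b \<cdot>\<^sub>v state A B x' u' t"
  using assms
proof (induction t)
  case (Suc t)
  then have t: "t < T" by simp
  let ?z = "state A B x u t" and ?z' = "state A B x' u' t"
  have z: "?z \<in> carrier_vec nx" "?z' \<in> carrier_vec nx"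
    using state_carrier t Suc.prems by auto
  have u: "u t \<in> carrier_vec nu" "u' t \<in> carrier_vec nu" and v: "v t = a \<cdot>\<^sub>v u t + b \<cdot>\<^sub>v u' t"
    using Suc.prems(4) by auto
  have IH: "state A B (a \<cdot>\<^sub>v x + b \<cdot>\<^sub>v x') v t = a \<cdot>\<^sub>v ?z + b \<cdot>\<^sub>v ?z'"
    using Suc.prems by (intro Suc.IH) auto
  have "state A B (a \<cdot>\<^sub>v x + b \<cdot>\<^sub>v x') v (Suc t)
      = A t *\<^sub>v (a \<cdot>\<^sub>v ?z + b \<cdot>\<^sub>v ?z') + B t *\<^sub>v (a \<cdot>\<^sub>v u t + b \<cdot>\<^sub>v u' t)"
    using IH by (simp add: v)
  also have "\<dots> = (a \<cdot>\<^sub>v (A t *\<^sub>v ?z) + b \<cdot>\<^sub>v (A t *\<^sub>v ?z')) + (a \<cdot>\<^sub>v (B t *\<^sub>v u t) + b \<cdot>\<^sub>v (B t *\<^sub>v u' t))"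
    using z u
    by (simp add: mult_mat_vec_lincomb[OF carrier_mats(1)[OF t]] mult_mat_vec_lincomb[OF carrier_mats(2)[OF t]])
  also have "\<dots> = a \<cdot>\<^sub>v (A t *\<^sub>v ?z + B t *\<^sub>v u t) + b \<cdot>\<^sub>v (A t *\<^sub>v ?z' + B t *\<^sub>v u' t)"
    using carrier_mats[OF t] z u by (intro lincomb_add_lincomb[of _ nx]) auto
  finally show ?case by (simp only: state.simps)
qed simp

definition output_at :: "real vec \<Rightarrow> real vec \<Rightarrow> nat \<Rightarrow> real vec" where
  "output_at x U t = C t *\<^sub>v state A B x (sample nu U) t + D t *\<^sub>v sample nu U t"

lemma out_sv_eq: "out_sv A B C D nu ny T x U = supervec ny T (output_at x U)"
  unfolding out_sv_def output_at_def ..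

lemma output_at_carrier: "t < T \<Longrightarrow> output_at x U t \<in> carrier_vec ny"
  using carrier_mats(4)[of t] unfolding output_at_def by (intro carrier_vecI) simp

lemma output_at_lincomb:
  assumes "t < T" and "x \<in> carrier_vec nx" "x' \<in> carrier_vec nx"
    and "U \<in> carrier_vec (nu * T)" "U' \<in> carrier_vec (nu * T)"
  shows "output_at (a \<cdot>\<^sub>v x + b \<cdot>\<^sub>v x') (a \<cdot>\<^sub>v U + b \<cdot>\<^sub>v U') t =
    a \<cdot>\<^sub>v output_at x U t + b \<cdot>\<^sub>v output_at x' U' t"
proof -
  let ?z = "state A B x (sample nu U) t" and ?z' = "state A B x' (sample nu U') t"
  have z: "?z \<in> carrier_vec nx" "?z' \<in> carrier_vec nx"
    using assms by (auto intro: state_carrier)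
  have "state A B (a \<cdot>\<^sub>v x + b \<cdot>\<^sub>v x') (sample nu (a \<cdot>\<^sub>v U + b \<cdot>\<^sub>v U')) t = a \<cdot>\<^sub>v ?z + b \<cdot>\<^sub>v ?z'"
    using assms by (intro state_lincomb) (auto simp: sample_lincomb)
  then have "output_at (a \<cdot>\<^sub>v x + b \<cdot>\<^sub>v x') (a \<cdot>\<^sub>v U + b \<cdot>\<^sub>v U') t
      = (a \<cdot>\<^sub>v (C t *\<^sub>v ?z) + b \<cdot>\<^sub>v (C t *\<^sub>v ?z')) +
        (a \<cdot>\<^sub>v (D t *\<^sub>v sample nu U t) + b \<cdot>\<^sub>v (D t *\<^sub>v sample nu U' t))"
    unfolding output_at_def using assms z
    by (simp add: sample_lincomb mult_mat_vec_lincomb[OF carrier_mats(3)[OF \<open>t < T\<close>]]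
        mult_mat_vec_lincomb[OF carrier_mats(4)[OF \<open>t < T\<close>]])
  also have "\<dots> = a \<cdot>\<^sub>v output_at x U t + b \<cdot>\<^sub>v output_at x' U' t"
    unfolding output_at_def using carrier_mats[OF \<open>t < T\<close>] z
    by (intro lincomb_add_lincomb[of _ ny]) auto
  finally show ?thesis .
qed

lemma out_sv_lincomb:
  assumes "x \<in> carrier_vec nx" "x' \<in> carrier_vec nx"
    and "U \<in> carrier_vec (nu * T)" "U' \<in> carrier_vec (nu * T)"
  shows "out_sv A B C D nu ny T (a \<cdot>\<^sub>v x + b \<cdot>\<^sub>v x') (a \<cdot>\<^sub>v U + b \<cdot>\<^sub>v U')
    = a \<cdot>\<^sub>v out_sv A B C D nu ny T x U + b \<cdot>\<^sub>v out_sv A B C D nu ny T x' U'"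
  unfolding out_sv_eq using assms
  by (simp add: supervec_cong[OF output_at_lincomb] supervec_lincomb output_at_carrier)

lemma out_sv_superposition:
  assumes "x0 \<in> carrier_vec nx" and "U \<in> carrier_vec (nu * T)"
  shows "out_sv A B C D nu ny T x0 U =
    out_sv A B C D nu ny T x0 (0\<^sub>v (nu * T)) + out_sv A B C D nu ny T (0\<^sub>v nx) U"
proof -
  have "out_sv A B C D nu ny T x0 U =
      out_sv A B C D nu ny T (1 \<cdot>\<^sub>v x0 + 1 \<cdot>\<^sub>v 0\<^sub>v nx) (1 \<cdot>\<^sub>v 0\<^sub>v (nu * T) + 1 \<cdot>\<^sub>v U)"
    using assms by simp
  also have "\<dots> = out_sv A B C D nu ny T x0 (0\<^sub>v (nu * T)) + out_sv A B C D nu ny T (0\<^sub>v nx) U"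
    using assms by (subst out_sv_lincomb) auto
  finally show ?thesis .
qed

definition io_trajectory :: "real vec \<Rightarrow> real vec \<Rightarrow> real vec" where
  "io_trajectory x0 U = U @\<^sub>v out_sv A B C D nu ny T x0 U"

lemma behavior_eq_image:
  assumes "x0 \<in> carrier_vec nx"
  shows "behavior A B C D nu ny T x0 = io_trajectory x0 ` carrier_vec (nu * T)"
proof (intro equalityI subsetI)
  fix w assume "w \<in> behavior A B C D nu ny T x0"
  then obtain u y x where w: "w = supervec nu T u @\<^sub>v supervec ny T y"
    and uy: "\<forall>t<T. u t \<in> carrier_vec nu \<and> y t \<in> carrier_vec ny"
    and x: "x 0 = x0" "\<forall>t<T. x (Suc t) = A t *\<^sub>v x t + B t *\<^sub>v u t \<and> y t = C t *\<^sub>v x t + D t *\<^sub>v u t"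
    unfolding behavior_def by blast
  let ?U = "supervec nu T u"
  have u: "t < T \<Longrightarrow> sample nu ?U t = u t" for t using uy sample_supervec by auto
  have "t \<le> T \<Longrightarrow> x t = state A B x0 (sample nu ?U) t" for t
    by (induction t) (use x u in auto)
  then have "supervec ny T y = out_sv A B C D nu ny T x0 ?U"
    unfolding out_sv_def by (intro supervec_cong) (auto simp: x u)
  then show "w \<in> io_trajectory x0 ` carrier_vec (nu * T)"
    unfolding w io_trajectory_def by auto
next
  fix w assume "w \<in> io_trajectory x0 ` carrier_vec (nu * T)"
  then obtain U where U: "U \<in> carrier_vec (nu * T)" and w: "w = io_trajectory x0 U" by blast
  let ?u = "sample nu U" and ?y = "output_at x0 U"
  have "w = supervec nu T ?u @\<^sub>v supervec ny T ?y"
    unfolding w io_trajectory_def out_sv_eq using supervec_sample[OF U] by simp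
  moreover have "\<forall>t<T. ?u t \<in> carrier_vec nu \<and> ?y t \<in> carrier_vec ny"
    using output_at_carrier by simp
  ultimately show "w \<in> behavior A B C D nu ny T x0"
    unfolding behavior_def
    by (intro CollectI exI[of _ ?u] exI[of _ ?y] conjI exI[of _ "state A B x0 ?u"])
      (auto simp: output_at_def)
qed

lemma io_trajectory_affine:
  assumes "x0 \<in> carrier_vec nx"
  shows "\<exists>M \<in> carrier_mat (nu * T + ny * T) (nu * T). \<forall>U \<in> carrier_vec (nu * T).
    io_trajectory x0 U = io_trajectory x0 (0\<^sub>v (nu * T)) + M *\<^sub>v U"
proof -
  let ?out = "out_sv A B C D nu ny T"
  have out_carrier: "?out x U \<in> carrier_vec (ny * T)" for x U
    unfolding out_sv_def by simp
  have "\<exists>M \<in> carrier_mat (nu * T + ny * T) (nu * T).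
      \<forall>U \<in> carrier_vec (nu * T). U @\<^sub>v ?out (0\<^sub>v nx) U = M *\<^sub>v U"
  proof (rule ex_mat_of_linear)
    fix a b :: real and U U' :: "real vec"
    assume U: "U \<in> carrier_vec (nu * T)" "U' \<in> carrier_vec (nu * T)"
    have "a \<cdot>\<^sub>v 0\<^sub>v nx + b \<cdot>\<^sub>v 0\<^sub>v nx = (0\<^sub>v nx :: real vec)" by (intro eq_vecI) simp_all
    then have "?out (0\<^sub>v nx) (a \<cdot>\<^sub>v U + b \<cdot>\<^sub>v U') =
        ?out (a \<cdot>\<^sub>v 0\<^sub>v nx + b \<cdot>\<^sub>v 0\<^sub>v nx) (a \<cdot>\<^sub>v U + b \<cdot>\<^sub>v U')"
      by simp
    also have "\<dots> = a \<cdot>\<^sub>v ?out (0\<^sub>v nx) U + b \<cdot>\<^sub>v ?out (0\<^sub>v nx) U'"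
      using U by (intro out_sv_lincomb) auto
    finally show "(a \<cdot>\<^sub>v U + b \<cdot>\<^sub>v U') @\<^sub>v ?out (0\<^sub>v nx) (a \<cdot>\<^sub>v U + b \<cdot>\<^sub>v U') =
        a \<cdot>\<^sub>v (U @\<^sub>v ?out (0\<^sub>v nx) U) + b \<cdot>\<^sub>v (U' @\<^sub>v ?out (0\<^sub>v nx) U')"
      using U out_carrier by (simp add: smult_append_vec append_vec_add[of _ "nu * T" _ _ "ny * T"])
  qed (use out_carrier in auto)
  then obtain M where M: "M \<in> carrier_mat (nu * T + ny * T) (nu * T)"
    and zero_state: "\<forall>U \<in> carrier_vec (nu * T). U @\<^sub>v ?out (0\<^sub>v nx) U = M *\<^sub>v U" by blast
  have "io_trajectory x0 U = io_trajectory x0 (0\<^sub>v (nu * T)) + M *\<^sub>v U"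
    if U: "U \<in> carrier_vec (nu * T)" for U
  proof -
    have "io_trajectory x0 U = U @\<^sub>v (?out x0 (0\<^sub>v (nu * T)) + ?out (0\<^sub>v nx) U)"
      unfolding io_trajectory_def out_sv_superposition[OF assms U] ..
    also have "\<dots> = (0\<^sub>v (nu * T) @\<^sub>v ?out x0 (0\<^sub>v (nu * T))) + (U @\<^sub>v ?out (0\<^sub>v nx) U)"
      using U out_carrier by (simp add: append_vec_add[of _ "nu * T" _ _ "ny * T"])
    finally show ?thesis
      using U zero_state unfolding io_trajectory_def by simp
  qed
  with M show ?thesis by blast
qed

lemma behavior_eq_translated_col_space:
  assumes x0: "x0 \<in> carrier_vec nx"
    and u: "\<And>k. k \<le> nu * T \<Longrightarrow> u k \<in> carrier_vec (nu * T)" and u0: "u 0 = 0\<^sub>v (nu * T)"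
    and rank: "vec_space.rank (nu * T) (mat_of_cols (nu * T) (map u [1..<nu * T + 1])) = nu * T"
    and w: "\<And>k. k \<le> nu * T \<Longrightarrow> w k = u k @\<^sub>v out_sv A B C D nu ny T x0 (u k)"
    and H: "vec_space.col_space ((nu + ny) * T) H = vec_space.col_space ((nu + ny) * T)
      (mat_of_cols ((nu + ny) * T) (map (\<lambda>k. w k - w 0) [1..<nu * T + 1]))"
  shows "behavior A B C D nu ny T x0 = (\<lambda>y. w 0 + y) ` vec_space.col_space ((nu + ny) * T) H"
proof -
  have "(nu + ny) * T = nu * T + ny * T" by (simp add: algebra_simps)
  then obtain M where M: "M \<in> carrier_mat ((nu + ny) * T) (nu * T)"
    and affine: "\<And>U. U \<in> carrier_vec (nu * T) \<Longrightarrow>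
      io_trajectory x0 U = io_trajectory x0 (0\<^sub>v (nu * T)) + M *\<^sub>v U"
    using io_trajectory_affine[OF x0] by auto
  have w_io: "k \<le> nu * T \<Longrightarrow> w k = io_trajectory x0 (u k)" for k
    using w unfolding io_trajectory_def by simp
  have map_eq: "map (\<lambda>k. w k - w 0) [1..<nu * T + 1] =
      map (\<lambda>k. io_trajectory x0 (u k) - io_trajectory x0 (0\<^sub>v (nu * T))) [1..<nu * T + 1]"
    using w_io u0 by (intro map_cong) auto
  show ?thesis
    unfolding behavior_eq_image[OF x0] H map_eq unfolding w_io[OF le0] u0
    by (intro affine_image_eq_translated_col_space[OF M affine]) (use u rank in auto)
qed

end

theorem theorem2:
  fixes A B C D :: "nat \<Rightarrow> nat \<Rightarrow> real mat"
    and nx :: "nat \<Rightarrow> nat" and nu ny T :: nat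
    and x0 :: "nat \<Rightarrow> real vec"
    and uk :: "nat \<Rightarrow> nat \<Rightarrow> real vec"
    and wk :: "nat \<Rightarrow> nat \<Rightarrow> real vec"
    and W H :: "nat \<Rightarrow> real mat"
    and U V Dm :: "real mat" and s :: "nat \<Rightarrow> real"
    and wg gbar wh :: "real vec"
  defines "N \<equiv> nu * T"
    and "nw \<equiv> nu + ny"
  assumes sys_dims: "\<And>i t. i \<in> {1, 2} \<Longrightarrow> t < T \<Longrightarrow>
        A i t \<in> carrier_mat (nx i) (nx i) \<and> B i t \<in> carrier_mat (nx i) nu \<and>
        C i t \<in> carrier_mat ny (nx i) \<and> D i t \<in> carrier_mat ny nu"
    and x0_dim: "\<And>i. i \<in> {1, 2} \<Longrightarrow> x0 i \<in> carrier_vec (nx i)"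
    \<comment> \<open>(C1)\<close>
    and uk_dim: "\<And>i k. i \<in> {1, 2} \<Longrightarrow> k \<le> N \<Longrightarrow> uk i k \<in> carrier_vec N"
    and uk0: "\<And>i. i \<in> {1, 2} \<Longrightarrow> uk i 0 = 0\<^sub>v N"
    and uk_rank: "\<And>i. i \<in> {1, 2} \<Longrightarrow>
        vec_space.rank N (mat_of_cols N (map (\<lambda>k. uk i k) [1..<N + 1])) = N"
    and wk_def: "\<And>i k. i \<in> {1, 2} \<Longrightarrow> k \<le> N \<Longrightarrow>
        wk i k = uk i k @\<^sub>v out_sv (A i) (B i) (C i) (D i) nu ny T (x0 i) (uk i k)"
    and W_def: "\<And>i. i \<in> {1, 2} \<Longrightarrow>
        W i = mat_of_cols (nw * T) (map (\<lambda>k. wk i k - wk i 0) [1..<N + 1])"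
    \<comment> \<open>(C2)\<close>
    and H_dim: "\<And>i. i \<in> {1, 2} \<Longrightarrow> H i \<in> carrier_mat (nw * T) N"
    and H_orth: "\<And>i. i \<in> {1, 2} \<Longrightarrow> (H i)\<^sup>T * H i = 1\<^sub>m N"
    and H_span: "\<And>i. i \<in> {1, 2} \<Longrightarrow>
        vec_space.col_space (nw * T) (H i) = vec_space.col_space (nw * T) (W i)"
    \<comment> \<open>(C3)\<close>
    and C3: "\<exists>l1 \<in> carrier_vec N. \<exists>l2 \<in> carrier_vec N.
        H 1 *\<^sub>v l1 + H 2 *\<^sub>v l2 = wk 2 0 - wk 1 0"
    \<comment> \<open>(C4)\<close>
    and U_dim: "U \<in> carrier_mat N N" and V_dim: "V \<in> carrier_mat N N"
    and U_orth: "U\<^sup>T * U = 1\<^sub>m N \<and> U * U\<^sup>T = 1\<^sub>m N"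
    and V_orth: "V\<^sup>T * V = 1\<^sub>m N \<and> V * V\<^sup>T = 1\<^sub>m N"
    and Dm_def: "Dm = diag_of N s"
    and s_pos: "\<And>j. j < N \<Longrightarrow> s j > 0"
    and s_mono: "\<And>j k. j \<le> k \<Longrightarrow> k < N \<Longrightarrow> s k \<le> s j"
    and svd: "(H 1)\<^sup>T * H 2 = U * Dm * V\<^sup>T"
    \<comment> \<open>the data of the theorem\<close>
    and wg_in: "wg \<in> behavior (A 2) (B 2) (C 2) (D 2) nu ny T (x0 2)"
    and gbar_dim: "gbar \<in> carrier_vec N"
    and wg_eq: "wg = H 2 *\<^sub>v (V *\<^sub>v gbar) + wk 2 0"
    and wh_def: "wh = H 1 *\<^sub>v (U *\<^sub>v (Dm *\<^sub>v gbar))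
        + oproj (vec_space.col_space (nw * T) (H 1)) (wk 2 0 - wk 1 0) + wk 1 0"
  shows "wh \<in> behavior (A 1) (B 1) (C 1) (D 1) nu ny T (x0 1) \<and>
    (\<forall>w \<in> behavior (A 1) (B 1) (C 1) (D 1) nu ny T (x0 1). vnorm (wh - wg) \<le> vnorm (w - wg))"
proof -
  interpret sys1: ltv_system "A 1" "B 1" "C 1" "D 1" "nx 1" nu ny T
    using sys_dims[of 1] by unfold_locales auto
  have B1: "behavior (A 1) (B 1) (C 1) (D 1) nu ny T (x0 1) =
      (\<lambda>y. wk 1 0 + y) ` vec_space.col_space (nw * T) (H 1)"
    unfolding nw_def
  proof (rule sys1.behavior_eq_translated_col_space[where u = "uk 1" and w = "wk 1"])
    show "vec_space.col_space ((nu + ny) * T) (H 1) = vec_space.col_space ((nu + ny) * T)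
        (mat_of_cols ((nu + ny) * T) (map (\<lambda>k. wk 1 k - wk 1 0) [1..<nu * T + 1]))"
      using H_span[of 1] W_def[of 1] unfolding N_def nw_def by (simp del: upt_Suc)
  qed (use x0_dim uk_dim uk0 uk_rank wk_def in \<open>auto simp: N_def simp del: upt_Suc\<close>)
  have wk: "wk i 0 \<in> carrier_vec (nw * T)" if "i \<in> {1, 2}" for i
    using wk_def[OF that, of 0] uk_dim[OF that, of 0] append_out_sv_carrier
    unfolding nw_def N_def by simp
  have Dm: "Dm \<in> carrier_mat N N" unfolding Dm_def diag_of_def by simp
  show ?thesis
    unfolding B1 wh_def wg_eq
    by (rule nearest_point_via_svd) (use H_dim H_orth U_dim Dm V_dim V_orth svd wk gbar_dim in auto)
qed

end
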